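(* Let $Q\in\mathcal{Q}(n,d,m)$ and let $A=(a_1,\dots,a_t)$, $t\geq1$, be a chain of paths in $Q$ such that $\underline{\delta}=2\sum_{i=1}^t\mathrm{mdeg}(a_i)\in\Omega_0(Q)$. Then $|\underline{\delta}|-mt-n_0\leq n$, where $n_0=0$ if $t=1$, $n_0=\#(V(a_1)\cap V(a_2))$ if $t=2$, and $n_0=\#(V(a_2)\cup\cdots\cup V(a_{t-1}))$ if $t\geq3$.
   Context: A quiver $Q$ is a finite oriented graph; for an arrow $a$, $a''$ is its tail and $a'$ its head. A path $a=a_1\cdots a_s$ ($a_i$ arrows) satisfies $a_i'=a_{i+1}''$; it is closed if $a_1''=a_s'$; $V(a)=\{a_1'',a_1',\dots,a_s'\}$, $A(a)=\{a_1,\dots,a_s\}$. A closed path is primitive if each vertex of $V(a)$ is the head of exactly one $a_i$. $m(Q)$ is the maximal degree of a primitive closed path; $Q$ is strongly connected if some closed path contains all vertices; $\mathcal{Q}(n,d,m)$ is the set of strongly connected quivers with $n$ vertices, $d$ arrows and $m(Q)=m$. The multidegree $\mathrm{mdeg}(a)\in\mathbb{N}^{\#A(Q)}$ of a path $a$ has $b$-component equal to the number of $i$ with $a_i=b$; $|\underline{\delta}|=\sum_b\delta_b$. $\Omega_0(Q)$ is the set of $\mathrm{mdeg}(h)$ for closed paths $h$ in $Q$ with $A(h)=A(Q)$. A chain of paths $(a_1,\dots,a_t)$ is an ordered sequence of primitive closed paths such that $V(a_i)\cap V(a_j)=\emptyset$ if $|i-j|>1$ and $V(a_i)\cap V(a_j)\neq\emptyset$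 if $|i-j|\leq1$. *)

theory Defs
  imports Main
begin

text \<open>A quiver is given by a vertex set Vs, an arrow set As, and tail/head maps
  (tail a = a'' and head a = a').  Multiple arrows and loops are allowed.\<close>

definition quiver :: "'v set \<Rightarrow> 'a set \<Rightarrow> ('a \<Rightarrow> 'v) \<Rightarrow> ('a \<Rightarrow> 'v) \<Rightarrow> bool" where
  "quiver Vs As tail head \<longleftrightarrow> finite Vs \<and> finite As \<and>
     (\<forall>b\<in>As. tail b \<in> Vs \<and> head b \<in> Vs)"

definition is_path :: "'a set \<Rightarrow> ('a \<Rightarrow> 'v) \<Rightarrow> ('a \<Rightarrow> 'v) \<Rightarrow> 'a list \<Rightarrow> bool" where
  "is_path As tail head p \<longleftrightarrow> p \<noteq> [] \<and> set p \<subseteq> As \<and>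
     (\<forall>i. Suc i < length p \<longrightarrow> head (p ! i) = tail (p ! Suc i))"

definition is_closed_path :: "'a set \<Rightarrow> ('a \<Rightarrow> 'v) \<Rightarrow> ('a \<Rightarrow> 'v) \<Rightarrow> 'a list \<Rightarrow> bool" where
  "is_closed_path As tail head p \<longleftrightarrow> is_path As tail head p \<and> tail (hd p) = head (last p)"

definition pverts :: "('a \<Rightarrow> 'v) \<Rightarrow> ('a \<Rightarrow> 'v) \<Rightarrow> 'a list \<Rightarrow> 'v set" where
  "pverts tail head p = insert (tail (hd p)) (head ` set p)"

definition parrows :: "'a list \<Rightarrow> 'a set" where
  "parrows p = set p"

definition is_primitive :: "'a set \<Rightarrow> ('a \<Rightarrow> 'v) \<Rightarrow> ('a \<Rightarrow> 'v) \<Rightarrow> 'a list \<Rightarrow> bool" where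
  "is_primitive As tail head p \<longleftrightarrow> is_closed_path As tail head p \<and>
     (\<forall>v\<in>pverts tail head p. card {i. i < length p \<and> head (p ! i) = v} = 1)"

definition mQ :: "'a set \<Rightarrow> ('a \<Rightarrow> 'v) \<Rightarrow> ('a \<Rightarrow> 'v) \<Rightarrow> nat" where
  "mQ As tail head = Max {length p | p. is_primitive As tail head p}"

definition strongly_connected :: "'v set \<Rightarrow> 'a set \<Rightarrow> ('a \<Rightarrow> 'v) \<Rightarrow> ('a \<Rightarrow> 'v) \<Rightarrow> bool" where
  "strongly_connected Vs As tail head \<longleftrightarrow>
     (\<exists>p. is_closed_path As tail head p \<and> Vs \<subseteq> pverts tail head p)"

definition mdeg :: "'a list \<Rightarrow> 'a \<Rightarrow> nat" where
  "mdeg p b = count_list p b"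

definition mdeg_size :: "'a set \<Rightarrow> ('a \<Rightarrow> nat) \<Rightarrow> nat" where
  "mdeg_size As \<delta> = (\<Sum>b\<in>As. \<delta> b)"

definition Omega0 :: "'a set \<Rightarrow> ('a \<Rightarrow> 'v) \<Rightarrow> ('a \<Rightarrow> 'v) \<Rightarrow> ('a \<Rightarrow> nat) set" where
  "Omega0 As tail head = {mdeg h | h. is_closed_path As tail head h \<and> parrows h = As}"

text \<open>Chain of paths (a_1,...,a_t), stored 0-indexed as a list.\<close>
definition is_chain :: "'a set \<Rightarrow> ('a \<Rightarrow> 'v) \<Rightarrow> ('a \<Rightarrow> 'v) \<Rightarrow> 'a list list \<Rightarrow> bool" where
  "is_chain As tail head cs \<longleftrightarrow>
     (\<forall>i<length cs. is_primitive As tail head (cs ! i)) \<and>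
     (\<forall>i<length cs. \<forall>j<length cs.
        (i + 1 < j \<or> j + 1 < i \<longrightarrow> pverts tail head (cs ! i) \<inter> pverts tail head (cs ! j) = {}) \<and>
        (i \<le> j + 1 \<and> j \<le> i + 1 \<longrightarrow> pverts tail head (cs ! i) \<inter> pverts tail head (cs ! j) \<noteq> {}))"

end

theory Submission
  imports Defs
begin

text \<open>Each arrow of a primitive closed path a has its own head, so deg a \<le> #V(a).  Hence
  |\<delta>| = 2 \<Sum> deg a_i \<le> \<Sum> deg a_i + \<Sum> #V(a_i) \<le> m t + \<Sum> #V(a_i).  Since only consecutive members
  of the chain meet, a vertex lies in at most one V(a_i), or in two if it is one of the n_0
  vertices counted by the overlaps; so \<Sum> #V(a_i) \<le> n + n_0.\<close>

lemma length_le_card_pverts_if_primitive: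
  assumes "is_primitive As tail head p"
  shows "length p \<le> card (pverts tail head p)"
proof -
  have "inj_on (\<lambda>i. head (p ! i)) {..<length p}"
  proof (rule inj_onI)
    fix i j assume i: "i \<in> {..<length p}" and j: "j \<in> {..<length p}"
      and eq: "head (p ! i) = head (p ! j)"
    have "head (p ! i) \<in> pverts tail head p" using i unfolding pverts_def by auto
    then have "card {k. k < length p \<and> head (p ! k) = head (p ! i)} = 1"
      using assms unfolding is_primitive_def by blast
    then obtain x where x: "{k. k < length p \<and> head (p ! k) = head (p ! i)} = {x}"
      using card_1_singletonE by blast
    have "i \<in> {x}" "j \<in> {x}" using i j eq by (auto simp flip: x)
    then show "i = j" by simp
  qed
  moreover have "(\<lambda>i. head (p ! i)) ` {..<length p} \<subseteq> pverts tail head p"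
    unfolding pverts_def by auto
  moreover have "finite (pverts tail head p)" unfolding pverts_def by simp
  ultimately show ?thesis using card_inj_on_le by fastforce
qed

lemma pverts_subset_if_primitive:
  assumes "quiver Vs As tail head" "is_primitive As tail head p"
  shows "pverts tail head p \<subseteq> Vs"
proof -
  have "p \<noteq> []" "set p \<subseteq> As" using assms(2)
    unfolding is_primitive_def is_closed_path_def is_path_def by auto
  then show ?thesis using assms(1) unfolding quiver_def pverts_def by (auto simp: hd_in_set subsetD)
qed

lemma length_le_mQ_if_primitive:
  assumes "quiver Vs As tail head" "is_primitive As tail head p"
  shows "length p \<le> mQ As tail head"
proof -
  have "{length q | q. is_primitive As tail head q} \<subseteq> {..card Vs}"
  proof clarify
    fix q assume q: "is_primitive As tail head q"
    have "card (pverts tail head q) \<le> card Vs"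
      using pverts_subset_if_primitive[OF assms(1) q] assms(1) card_mono
      unfolding quiver_def by blast
    then show "length q \<le> card Vs" using length_le_card_pverts_if_primitive[OF q] by simp
  qed
  then have "finite {length q | q. is_primitive As tail head q}" by (rule finite_subset) simp
  then show ?thesis unfolding mQ_def using assms(2) by (intro Max_ge) auto
qed

lemma mdeg_size_sum_mdeg:
  assumes "finite As" "\<And>i. i \<in> I \<Longrightarrow> set (f i) \<subseteq> As"
  shows "mdeg_size As (\<lambda>b. \<Sum>i\<in>I. mdeg (f i) b) = (\<Sum>i\<in>I. length (f i))"
  unfolding mdeg_size_def mdeg_def using assms by (subst sum.swap) (simp add: sum_count_set)

lemma card_indices_le_if_only_consecutive_meet:
  fixes V :: "nat \<Rightarrow> 'v set"
  assumes meet: "\<And>i j. i < t \<Longrightarrow> j < t \<Longrightarrow> v \<in> V i \<Longrightarrow> v \<in> V j \<Longrightarrow> i \<noteq> j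
                      \<Longrightarrow> v \<in> N \<and> (j = Suc i \<or> i = Suc j)"
  shows "card {i \<in> {..<t}. v \<in> V i} \<le> (if v \<in> N then 2 else 1)"
proof (cases "{i \<in> {..<t}. v \<in> V i} = {}")
  case False
  let ?S = "{i \<in> {..<t}. v \<in> V i}"
  define i0 where "i0 = Min ?S"
  have "finite ?S" by simp
  have i0: "i0 \<in> ?S" and min: "\<And>j. j \<in> ?S \<Longrightarrow> i0 \<le> j"
    using Min_in[OF \<open>finite ?S\<close> False] Min_le[OF \<open>finite ?S\<close>] by (simp_all add: i0_def)
  have members: "j = i0 \<or> (v \<in> N \<and> j = Suc i0)" if j: "j \<in> ?S" for j
  proof (cases "j = i0")
    case False
    with meet[of i0 j] i0 j min[OF j] show ?thesis by auto
  qed simp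
  show ?thesis
  proof (cases "v \<in> N")
    case True
    have "card ?S \<le> card {i0, Suc i0}" using members by (intro card_mono) auto
    with True show ?thesis by simp
  next
    case False
    have "card ?S \<le> card {i0}" using members False by (intro card_mono) auto
    with False show ?thesis by simp
  qed
next
  case True
  then show ?thesis by (simp only: card.empty)
qed

lemma sum_card_le_card_UN_plus_card_if_only_consecutive_meet:
  fixes V :: "nat \<Rightarrow> 'v set"
  assumes fin: "\<And>i. i < t \<Longrightarrow> finite (V i)" and "finite N"
    and meet: "\<And>v i j. i < t \<Longrightarrow> j < t \<Longrightarrow> v \<in> V i \<Longrightarrow> v \<in> V j \<Longrightarrow> i \<noteq> j
                        \<Longrightarrow> v \<in> N \<and> (j = Suc i \<or> i = Suc j)"
  shows "(\<Sum>i<t. card (V i)) \<le> card (\<Union>i<t. V i) + card N"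
proof -
  let ?U = "\<Union>i<t. V i"
  have "finite ?U" using fin by auto
  have "(\<Sum>i<t. card (V i)) = (\<Sum>i<t. card {v \<in> ?U. v \<in> V i})"
    by (intro sum.cong) (auto intro!: arg_cong[of _ _ card])
  also have "\<dots> = (\<Sum>v\<in>?U. card {i \<in> {..<t}. v \<in> V i})"
    using \<open>finite ?U\<close> by (intro sum_multicount_gen) auto
  also have "\<dots> \<le> (\<Sum>v\<in>?U. 1 + of_bool (v \<in> N))"
  proof (rule sum_mono)
    fix v
    have "card {i \<in> {..<t}. v \<in> V i} \<le> (if v \<in> N then 2 else 1)"
      by (rule card_indices_le_if_only_consecutive_meet) (rule meet)
    then show "card {i \<in> {..<t}. v \<in> V i} \<le> 1 + of_bool (v \<in> N)" by (simp split: if_splits)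
  qed
  also have "\<dots> = card ?U + card (?U \<inter> N)"
    using \<open>finite ?U\<close> by (subst sum.distrib) (simp add: Int_def)
  also have "\<dots> \<le> card ?U + card N"
    using \<open>finite N\<close> by (simp add: card_mono)
  finally show ?thesis .
qed

definition chain_overlap :: "('a \<Rightarrow> 'v) \<Rightarrow> ('a \<Rightarrow> 'v) \<Rightarrow> 'a list list \<Rightarrow> 'v set" where
  "chain_overlap tail head cs =
     (if length cs = 1 then {}
      else if length cs = 2 then pverts tail head (cs ! 0) \<inter> pverts tail head (cs ! 1)
      else (\<Union>i\<in>{1..length cs - 2}. pverts tail head (cs ! i)))"

lemma card_chain_overlap:
  "card (chain_overlap tail head cs) =
     (if length cs = 1 then 0
      else if length cs = 2 then card (pverts tail head (cs ! 0) \<inter> pverts tail head (cs ! 1))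
      else card (\<Union>i\<in>{1..length cs - 2}. pverts tail head (cs ! i)))"
  unfolding chain_overlap_def by simp

lemma finite_chain_overlap: "finite (chain_overlap tail head cs)"
  unfolding chain_overlap_def pverts_def by simp

lemma chain_meet_consecutive:
  assumes "is_chain As tail head cs" "i < length cs" "j < length cs" "i \<noteq> j"
    and "v \<in> pverts tail head (cs ! i)" "v \<in> pverts tail head (cs ! j)"
  shows "v \<in> chain_overlap tail head cs \<and> (j = Suc i \<or> i = Suc j)"
proof -
  have adjacent: "j = Suc i \<or> i = Suc j"
  proof (rule ccontr)
    assume "\<not> (j = Suc i \<or> i = Suc j)"
    then have "i + 1 < j \<or> j + 1 < i" using assms(4) by auto
    then have "pverts tail head (cs ! i) \<inter> pverts tail head (cs ! j) = {}"
      using assms(1-3) unfolding is_chain_def by blast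
    with assms(5,6) show False by blast
  qed
  consider "length cs = 2" | "length cs \<ge> 3" using assms(2-4) by linarith
  then have "v \<in> chain_overlap tail head cs"
  proof cases
    case 1
    then show ?thesis using assms(2-6) unfolding chain_overlap_def by (auto simp: less_2_cases_iff)
  next
    case 2
    from adjacent have "i \<in> {1..length cs - 2} \<or> j \<in> {1..length cs - 2}"
    proof
      assume "j = Suc i"
      then show ?thesis using assms(3) 2 by (cases "i = 0") auto
    next
      assume "i = Suc j"
      then show ?thesis using assms(2) 2 by (cases "j = 0") auto
    qed
    then show ?thesis using 2 assms(5,6) unfolding chain_overlap_def by auto
  qed
  with adjacent show ?thesis by blast
qed

theorem lemma3p7:
  fixes Vs :: "'v set" and As :: "'a set" and tail head :: "'a \<Rightarrow> 'v"
    and cs :: "'a list list"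
  assumes "quiver Vs As tail head"
    and "strongly_connected Vs As tail head"
    and "is_chain As tail head cs"
    and "length cs \<ge> 1"
    and "(\<lambda>b. 2 * (\<Sum>i<length cs. mdeg (cs ! i) b)) \<in> Omega0 As tail head"
  shows "int (mdeg_size As (\<lambda>b. 2 * (\<Sum>i<length cs. mdeg (cs ! i) b)))
           - int (mQ As tail head) * int (length cs)
           - int (if length cs = 1 then 0
                  else if length cs = 2 then card (pverts tail head (cs ! 0) \<inter> pverts tail head (cs ! 1))
                  else card (\<Union>i\<in>{1..length cs - 2}. pverts tail head (cs ! i)))
         \<le> int (card Vs)"
proof -
  let ?t = "length cs" and ?V = "\<lambda>i. pverts tail head (cs ! i)"
  have prim: "\<And>i. i < ?t \<Longrightarrow> is_primitive As tail head (cs ! i)"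
    using assms(3) unfolding is_chain_def by blast
  have "mdeg_size As (\<lambda>b. 2 * (\<Sum>i<?t. mdeg (cs ! i) b))
        = 2 * mdeg_size As (\<lambda>b. \<Sum>i<?t. mdeg (cs ! i) b)"
    unfolding mdeg_size_def by (simp add: sum_distrib_left)
  also have "\<dots> = 2 * (\<Sum>i<?t. length (cs ! i))"
    using assms(1) prim
    unfolding quiver_def is_primitive_def is_closed_path_def is_path_def
    by (subst mdeg_size_sum_mdeg) auto
  moreover have "(\<Sum>i<?t. length (cs ! i)) \<le> mQ As tail head * ?t"
    using sum_mono[of "{..<?t}" "\<lambda>i. length (cs ! i)" "\<lambda>_. mQ As tail head"]
      length_le_mQ_if_primitive[OF assms(1) prim] by (simp add: mult.commute)
  moreover have "(\<Sum>i<?t. length (cs ! i)) \<le> (\<Sum>i<?t. card (?V i))"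
    by (intro sum_mono) (use length_le_card_pverts_if_primitive[OF prim] in auto)
  moreover have "(\<Sum>i<?t. card (?V i)) \<le> card (\<Union>i<?t. ?V i) + card (chain_overlap tail head cs)"
    using chain_meet_consecutive[OF assms(3)] finite_chain_overlap
    by (intro sum_card_le_card_UN_plus_card_if_only_consecutive_meet) (auto simp: pverts_def)
  moreover have "card (\<Union>i<?t. ?V i) \<le> card Vs"
    using assms(1) pverts_subset_if_primitive[OF assms(1) prim]
    unfolding quiver_def by (intro card_mono) auto
  ultimately have "mdeg_size As (\<lambda>b. 2 * (\<Sum>i<?t. mdeg (cs ! i) b))
      \<le> mQ As tail head * ?t + card (chain_overlap tail head cs) + card Vs"
    by linarith
  then have "int (mdeg_size As (\<lambda>b. 2 * (\<Sum>i<?t. mdeg (cs ! i) b)))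
      \<le> int (mQ As tail head) * int ?t + int (card (chain_overlap tail head cs)) + int (card Vs)"
    by (simp only: of_nat_le_iff of_nat_add[symmetric] of_nat_mult[symmetric])
  then show ?thesis unfolding card_chain_overlap by linarith
qed

end
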